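(* Let $a,b,c,k,m>0$ and consider the system $$\frac{dx}{dt}=bx(1-x-cy),\qquad \frac{dy}{dt}=y\Big(\frac{1}{1+kx}-y-ax-mxy\Big).$$ Let $k^*=\frac{1}{a}-1$. If $0<k<k^*$ and $0<c<1$, then the system is permanent: there exist constants $0<\mu\le M$, independent of the solution, such that every solution with $x(0)>0$, $y(0)>0$ satisfies $$\mu\le\liminf_{t\to+\infty}x(t)\le\limsup_{t\to+\infty}x(t)\le M,\qquad \mu\le\liminf_{t\to+\infty}y(t)\le\limsup_{t\to+\infty}y(t)\le M.$$
   Context: All parameters $a,b,c,k,m$ are positive constants. *)

theory Defs
  imports "HOL-Analysis.Analysis" "HOL-Library.Extended_Real" "HOL-Library.Liminf_Limsup"
begin

definition is_solution :: "real \<Rightarrow> real \<Rightarrow> real \<Rightarrow> real \<Rightarrow> real \<Rightarrow>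
    (real \<Rightarrow> real) \<Rightarrow> (real \<Rightarrow> real) \<Rightarrow> bool" where
  "is_solution a b c k m x y \<longleftrightarrow>
     (\<forall>t\<ge>0. (x has_real_derivative (b * x t * (1 - x t - c * y t))) (at t within {0..}) \<and>
            (y has_real_derivative (y t * (1 / (1 + k * x t) - y t - a * x t - m * x t * y t)))
               (at t within {0..}))"

end

theory Submission
  imports Defs
begin

(*
  Solutions starting in the open quadrant stay there, because each equation has the form
  z' = z h with h continuous.  The logistic self-limitation then bounds both components:
  whenever x > U > 1 (resp. y > U > 1) the derivative is below a negative constant, so
  eventually x, y <= U.  Once y <= Y with c Y < 1, the per-capita growth rate of x is
  bounded below by a positive constant while x is small, hence x is eventually bounded away
  from 0.  Symmetrically, once x <= X with a X < 1 / (1 + k X), y is eventually bounded away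
  from 0; such an X > 1 exists by continuity precisely because a (1 + k) < 1, i.e. k < k*.
  Each "eventually above a level" claim comes from a positive lower bound on the derivative
  (of ln z, for the lower bounds) below that level.
*)

lemma ge_level_forward_invariant:
  fixes z z' :: "real \<Rightarrow> real"
  assumes cont: "continuous_on {T..} z"
    and deriv: "\<And>t. T < t \<Longrightarrow> (z has_real_derivative z' t) (at t)"
    and up: "\<And>t. T < t \<Longrightarrow> z t < L \<Longrightarrow> 0 < z' t"
    and "T \<le> t0" "t0 \<le> t1" "L \<le> z t0"
  shows "L \<le> z t1"
proof (rule ccontr)
  assume below: "\<not> L \<le> z t1"
  define S where "S = {t0..t1} \<inter> z -` {L..}"
  have "closed S"
    unfolding S_def using assms(4)
    by (intro continuous_closed_preimage continuous_on_subset[OF cont]) auto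
  moreover have "t0 \<in> S" "bdd_above S"
    using assms(5,6) unfolding S_def by auto
  ultimately have "Sup S \<in> S"
    using closed_contains_Sup by blast
  define s where "s = Sup S"
  have s: "t0 \<le> s" "s \<le> t1" "L \<le> z s"
    using \<open>Sup S \<in> S\<close> unfolding S_def s_def by auto
  with below have "s < t1"
    by (metis order.order_iff_strict)
  have after: "z u < L" if "s < u" "u \<le> t1" for u
  proof (rule ccontr)
    assume "\<not> z u < L"
    then have "u \<in> S"
      using that s unfolding S_def by auto
    then have "u \<le> s"
      unfolding s_def using \<open>bdd_above S\<close> by (rule cSup_upper)
    with \<open>s < u\<close> show False
      by simp
  qed
  have "z s < z t1"
  proof (rule DERIV_pos_imp_increasing_open[where f = z, OF \<open>s < t1\<close>])
    fix u assume "s < u" "u < t1"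
    then have "T < u"
      using s assms(4) by simp
    then show "\<exists>d. (z has_real_derivative d) (at u) \<and> 0 < d"
      using deriv up after \<open>s < u\<close> \<open>u < t1\<close> by fastforce
  next
    show "continuous_on {s..t1} z"
      using s assms(4) by (auto intro: continuous_on_subset[OF cont])
  qed
  with s below show False
    by linarith
qed

lemma eventually_ge_of_deriv_ge:
  fixes z z' :: "real \<Rightarrow> real"
  assumes cont: "continuous_on {T..} z"
    and deriv: "\<And>t. T < t \<Longrightarrow> (z has_real_derivative z' t) (at t)"
    and up: "\<And>t. T < t \<Longrightarrow> z t < L \<Longrightarrow> \<delta> \<le> z' t"
    and "0 < \<delta>"
  shows "eventually (\<lambda>t. L \<le> z t) at_top"
proof -
  have "\<exists>t0\<ge>T. L \<le> z t0"
  proof (rule ccontr)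
    assume "\<not> ?thesis"
    then have below: "z t < L" if "T \<le> t" for t
      using that by force
    define t where "t = T + (L - z T) / \<delta> + 1"
    have "T < t"
      using below[of T] \<open>0 < \<delta>\<close> unfolding t_def by (simp add: field_simps)
    have "z T - \<delta> * T \<le> z t - \<delta> * t"
    proof (rule DERIV_nonneg_imp_increasing_open[where f = "\<lambda>s. z s - \<delta> * s"])
      fix s assume "T < s" "s < t"
      then show "\<exists>d. ((\<lambda>s. z s - \<delta> * s) has_real_derivative d) (at s) \<and> 0 \<le> d"
        using deriv[of s] up[of s] below[of s]
        by (intro exI[of _ "z' s - \<delta>"]) (auto intro!: derivative_eq_intros)
    qed (use \<open>T < t\<close> in \<open>auto intro!: continuous_intros continuous_on_subset[OF cont]\<close>)
    then have "z T + \<delta> * (t - T) \<le> z t"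
      by (simp add: algebra_simps)
    moreover have "\<delta> * (t - T) = L - z T + \<delta>"
      using \<open>0 < \<delta>\<close> unfolding t_def by (simp add: field_simps)
    ultimately have "L < z t"
      using \<open>0 < \<delta>\<close> by linarith
    with below[of t] \<open>T < t\<close> show False
      by simp
  qed
  then obtain t0 where "T \<le> t0" "L \<le> z t0"
    by blast
  have "L \<le> z t" if "t0 \<le> t" for t
  proof (rule ge_level_forward_invariant[OF cont deriv _ \<open>T \<le> t0\<close> that \<open>L \<le> z t0\<close>])
    fix s assume "T < s" "z s < L"
    then show "0 < z' s"
      using up \<open>0 < \<delta>\<close> by (meson less_le_trans)
  qed
  then show ?thesis
    unfolding eventually_at_top_linorder by blast
qed

lemma eventually_le_of_deriv_le:
  fixes z z' :: "real \<Rightarrow> real"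
  assumes cont: "continuous_on {T..} z"
    and deriv: "\<And>t. T < t \<Longrightarrow> (z has_real_derivative z' t) (at t)"
    and down: "\<And>t. T < t \<Longrightarrow> U < z t \<Longrightarrow> z' t \<le> - \<delta>"
    and "0 < \<delta>"
  shows "eventually (\<lambda>t. z t \<le> U) at_top"
proof -
  have "eventually (\<lambda>t. - U \<le> - z t) at_top"
  proof (rule eventually_ge_of_deriv_ge[where z' = "\<lambda>t. - z' t" and \<delta> = \<delta>])
    show "continuous_on {T..} (\<lambda>t. - z t)"
      using cont by (rule continuous_on_minus)
    fix t assume "T < t"
    then show "((\<lambda>t. - z t) has_real_derivative - z' t) (at t)"
      by (intro DERIV_minus deriv)
    assume "- z t < - U"
    then show "\<delta> \<le> - z' t"
      using down[OF \<open>T < t\<close>] by force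
  qed fact
  then show ?thesis
    by simp
qed

lemma eventually_ge_of_log_deriv_ge:
  fixes z z' :: "real \<Rightarrow> real"
  assumes cont: "continuous_on {T..} z"
    and deriv: "\<And>t. T < t \<Longrightarrow> (z has_real_derivative z' t) (at t)"
    and pos: "\<And>t. T \<le> t \<Longrightarrow> 0 < z t"
    and up: "\<And>t. T < t \<Longrightarrow> z t < L \<Longrightarrow> \<gamma> * z t \<le> z' t"
    and "0 < \<gamma>" "0 < L"
  shows "eventually (\<lambda>t. L \<le> z t) at_top"
proof -
  have "eventually (\<lambda>t. ln L \<le> ln (z t)) at_top"
  proof (rule eventually_ge_of_deriv_ge[where z' = "\<lambda>t. z' t / z t" and \<delta> = \<gamma>])
    show "continuous_on {T..} (\<lambda>t. ln (z t))"
      by (intro continuous_intros cont) (use pos in force)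
    fix t assume "T < t"
    then show "((\<lambda>t. ln (z t)) has_real_derivative z' t / z t) (at t)"
      using deriv pos by (auto intro!: derivative_eq_intros)
    assume "ln (z t) < ln L"
    then show "\<gamma> \<le> z' t / z t"
      using up[OF \<open>T < t\<close>] pos[of t] \<open>T < t\<close> \<open>0 < L\<close> by (simp add: field_simps)
  qed fact
  moreover have "eventually (\<lambda>t. T \<le> t) at_top"
    by (rule eventually_ge_at_top)
  ultimately show ?thesis
    by eventually_elim (use pos \<open>0 < L\<close> in simp)
qed

lemma pos_at_of_deriv_eq_mult:
  fixes z h :: "real \<Rightarrow> real"
  assumes "0 \<le> t1"
    and cont: "continuous_on {0..t1} z" and cont_h: "continuous_on {0..t1} h"
    and deriv: "\<And>t. 0 < t \<Longrightarrow> t < t1 \<Longrightarrow> (z has_real_derivative z t * h t) (at t)"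
    and pos: "\<And>t. 0 < t \<Longrightarrow> t < t1 \<Longrightarrow> 0 < z t"
    and "0 < z 0"
  shows "0 < z t1"
proof -
  obtain t\<^sub>m where "\<forall>t\<in>{0..t1}. h t\<^sub>m \<le> h t"
    using continuous_attains_inf[OF compact_Icc _ cont_h] \<open>0 \<le> t1\<close> by auto
  define w where "w t = z t * exp (- h t\<^sub>m * t)" for t
  \<comment> \<open>the weight turns z' = z h into w' = w (h - min h), which is nonnegative\<close>
  have "w 0 \<le> w t1"
  proof (rule DERIV_nonneg_imp_increasing_open[where f = w, OF \<open>0 \<le> t1\<close>])
    fix t assume t: "0 < t" "t < t1"
    have "(w has_real_derivative exp (- h t\<^sub>m * t) * (z t * (h t - h t\<^sub>m))) (at t)"
      unfolding w_def using deriv[OF t]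
      by (auto intro!: derivative_eq_intros simp: algebra_simps)
    moreover have "0 \<le> exp (- h t\<^sub>m * t) * (z t * (h t - h t\<^sub>m))"
      using pos[OF t] \<open>\<forall>t\<in>{0..t1}. h t\<^sub>m \<le> h t\<close> t by simp
    ultimately show "\<exists>d. (w has_real_derivative d) (at t) \<and> 0 \<le> d"
      by blast
  qed (unfold w_def, intro continuous_intros cont)
  then have "0 < w t1"
    using \<open>0 < z 0\<close> by (simp add: w_def)
  then show ?thesis
    by (simp add: w_def zero_less_mult_iff)
qed

lemma pos_of_deriv_eq_mult:
  fixes z h :: "real \<Rightarrow> real"
  assumes cont: "continuous_on {0..} z" and cont_h: "continuous_on {0..} h"
    and deriv: "\<And>t. 0 < t \<Longrightarrow> (z has_real_derivative z t * h t) (at t)"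
    and "0 < z 0" "0 \<le> t"
  shows "0 < z t"
proof (rule ccontr)
  assume "\<not> 0 < z t"
  define B where "B = {0..} \<inter> z -` {..0}"
  have "closed B"
    unfolding B_def by (intro continuous_closed_preimage cont) auto
  moreover have "t \<in> B" "bdd_below B"
    using \<open>\<not> 0 < z t\<close> \<open>0 \<le> t\<close> unfolding B_def by auto
  ultimately have "Inf B \<in> B"
    using closed_contains_Inf by blast
  define t1 where "t1 = Inf B"
  have "0 \<le> t1" "z t1 \<le> 0"
    using \<open>Inf B \<in> B\<close> unfolding B_def t1_def by auto
  have before: "0 < z s" if "0 \<le> s" "s < t1" for s
    using that cInf_lower[OF _ \<open>bdd_below B\<close>, of s] unfolding B_def t1_def by force
  have "0 < z t1"
  proof (rule pos_at_of_deriv_eq_mult[where z = z and h = h])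
    show "continuous_on {0..t1} z" "continuous_on {0..t1} h"
      by (auto intro: continuous_on_subset[OF cont] continuous_on_subset[OF cont_h])
  qed (use deriv before \<open>0 < z 0\<close> \<open>0 \<le> t1\<close> in auto)
  with \<open>z t1 \<le> 0\<close> show False
    by simp
qed

lemma ereal_Liminf_Limsup_bounds:
  fixes f :: "'a \<Rightarrow> real"
  assumes "F \<noteq> bot" "eventually (\<lambda>t. \<mu> \<le> f t \<and> f t \<le> M) F"
  shows "ereal \<mu> \<le> Liminf F (\<lambda>t. ereal (f t)) \<and>
    Liminf F (\<lambda>t. ereal (f t)) \<le> Limsup F (\<lambda>t. ereal (f t)) \<and>
    Limsup F (\<lambda>t. ereal (f t)) \<le> ereal M"
  using assms
  by (intro conjI Liminf_bounded Limsup_bounded Liminf_le_Limsup) (auto elim: eventually_mono)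

lemma ex_gt_1_mult_less_inverse:
  fixes a k :: real
  assumes "0 \<le> k" "a * (1 + k) < 1"
  shows "\<exists>X>1. a * X < 1 / (1 + k * X)"
proof -
  have "((\<lambda>X. 1 / (1 + k * X) - a * X) \<longlongrightarrow> 1 / (1 + k * 1) - a * 1) (at_right 1)"
    using \<open>0 \<le> k\<close> by (intro tendsto_intros) auto
  moreover have "0 < 1 / (1 + k * 1) - a * 1"
    using assms by (simp add: field_simps)
  ultimately have "eventually (\<lambda>X. 0 < 1 / (1 + k * X) - a * X) (at_right 1)"
    by (rule order_tendstoD)
  then have "eventually (\<lambda>X. 1 < X \<and> a * X < 1 / (1 + k * X)) (at_right (1::real))"
    using eventually_at_right_less[of 1] by eventually_elim auto
  then show ?thesis
    using eventually_happens' trivial_limit_at_right_real by blast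
qed

lemma is_solution_continuous_on:
  assumes "is_solution a b c k m x y"
  shows "continuous_on {0..} x" "continuous_on {0..} y"
  using assms unfolding is_solution_def continuous_on_eq_continuous_within
  by (auto intro: DERIV_continuous)

lemma is_solution_deriv:
  assumes "is_solution a b c k m x y" "0 < t"
  shows "(x has_real_derivative b * x t * (1 - x t - c * y t)) (at t)"
    and "(y has_real_derivative y t * (1 / (1 + k * x t) - y t - a * x t - m * x t * y t)) (at t)"
proof -
  have "at t within {0..} = at t"
    using \<open>0 < t\<close> by (intro at_within_interior) auto
  moreover have "(x has_real_derivative b * x t * (1 - x t - c * y t)) (at t within {0..})"
    and "(y has_real_derivative y t * (1 / (1 + k * x t) - y t - a * x t - m * x t * y t))
      (at t within {0..})"
    using assms unfolding is_solution_def by auto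
  ultimately show "(x has_real_derivative b * x t * (1 - x t - c * y t)) (at t)"
    and "(y has_real_derivative y t * (1 / (1 + k * x t) - y t - a * x t - m * x t * y t)) (at t)"
    by simp_all
qed

lemma is_solution_pos:
  assumes sol: "is_solution a b c k m x y" and "0 \<le> k" "0 < x 0" "0 < y 0" "0 \<le> t"
  shows "0 < x t" "0 < y t"
proof -
  note cont = is_solution_continuous_on[OF sol]
  have x_pos: "0 < x s" if "0 \<le> s" for s
  proof (rule pos_of_deriv_eq_mult[where z = x and h = "\<lambda>s. b * (1 - x s - c * y s)"])
    show "continuous_on {0..} (\<lambda>s. b * (1 - x s - c * y s))"
      by (intro continuous_intros cont)
  qed (use is_solution_deriv(1)[OF sol] cont \<open>0 < x 0\<close> that in \<open>simp_all add: ac_simps\<close>)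
  then show "0 < x t"
    using \<open>0 \<le> t\<close> .
  show "0 < y t"
  proof (rule pos_of_deriv_eq_mult[where z = y
        and h = "\<lambda>s. 1 / (1 + k * x s) - y s - a * x s - m * x s * y s"])
    have "1 + k * x s \<noteq> 0" if "0 \<le> s" for s
      using x_pos[OF that] \<open>0 \<le> k\<close> by (smt (verit) mult_nonneg_nonneg)
    then show "continuous_on {0..} (\<lambda>s. 1 / (1 + k * x s) - y s - a * x s - m * x s * y s)"
      by (intro continuous_intros cont) auto
  qed (use is_solution_deriv(2)[OF sol] cont \<open>0 < y 0\<close> \<open>0 \<le> t\<close> in auto)
qed

lemma is_solution_eventually_x_le:
  assumes sol: "is_solution a b c k m x y" and "0 < b" "0 \<le> c" "0 \<le> k" "0 < x 0" "0 < y 0"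
    and "1 < U"
  shows "eventually (\<lambda>t. x t \<le> U) at_top"
proof (rule eventually_le_of_deriv_le[OF is_solution_continuous_on(1)[OF sol]
      is_solution_deriv(1)[OF sol]])
  fix t :: real assume "0 < t" "U < x t"
  moreover have "0 \<le> c * y t"
    using is_solution_pos(2)[OF sol] assms \<open>0 < t\<close> by (simp add: less_imp_le)
  ultimately have "U * (U - 1) \<le> x t * (x t - 1 + c * y t)"
    using assms by (intro mult_mono) auto
  then have "b * (U * (U - 1)) \<le> b * (x t * (x t - 1 + c * y t))"
    using \<open>0 < b\<close> by simp
  then show "b * x t * (1 - x t - c * y t) \<le> - (b * (U * (U - 1)))"
    by (simp add: algebra_simps)
qed (use assms in \<open>auto intro!: mult_pos_pos\<close>)

lemma is_solution_eventually_y_le: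
  assumes sol: "is_solution a b c k m x y" and "0 \<le> a" "0 \<le> k" "0 \<le> m" "0 < x 0" "0 < y 0"
    and "1 < U"
  shows "eventually (\<lambda>t. y t \<le> U) at_top"
proof (rule eventually_le_of_deriv_le[OF is_solution_continuous_on(2)[OF sol]
      is_solution_deriv(2)[OF sol]])
  fix t :: real assume "0 < t" "U < y t"
  have "0 < x t"
    using is_solution_pos[OF sol] assms \<open>0 < t\<close> by simp
  then have "1 / (1 + k * x t) \<le> 1" "0 \<le> a * x t + m * x t * y t"
    using \<open>U < y t\<close> assms by (simp_all add: divide_le_eq)
  then have "U - 1 \<le> y t - 1 / (1 + k * x t) + a * x t + m * x t * y t"
    using \<open>U < y t\<close> by linarith
  then have "U * (U - 1) \<le> y t * (y t - 1 / (1 + k * x t) + a * x t + m * x t * y t)"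
    using \<open>U < y t\<close> assms by (intro mult_mono) auto
  then show "y t * (1 / (1 + k * x t) - y t - a * x t - m * x t * y t) \<le> - (U * (U - 1))"
    by (simp add: algebra_simps)
qed (use assms in \<open>auto intro!: mult_pos_pos\<close>)

lemma is_solution_eventually_x_ge:
  assumes sol: "is_solution a b c k m x y" and "0 < b" "0 \<le> c" "0 \<le> k" "0 < x 0" "0 < y 0"
    and y_le: "eventually (\<lambda>t. y t \<le> Y) at_top" and "c * Y < 1"
  shows "eventually (\<lambda>t. (1 - c * Y) / 2 \<le> x t) at_top"
proof -
  obtain T where T: "\<And>t. T \<le> t \<Longrightarrow> y t \<le> Y"
    using y_le unfolding eventually_at_top_linorder by blast
  show ?thesis
  proof (rule eventually_ge_of_log_deriv_ge[where T = "max 0 T" and \<gamma> = "b * (1 - c * Y) / 2"])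
    show "continuous_on {max 0 T..} x"
      by (rule continuous_on_subset[OF is_solution_continuous_on(1)[OF sol]]) auto
    fix t :: real assume "max 0 T < t"
    then show "(x has_real_derivative b * x t * (1 - x t - c * y t)) (at t)"
      by (intro is_solution_deriv(1)[OF sol]) auto
    assume "x t < (1 - c * Y) / 2"
    moreover have "c * y t \<le> c * Y"
      using T[of t] \<open>max 0 T < t\<close> \<open>0 \<le> c\<close> by (simp add: mult_left_mono)
    ultimately have "(1 - c * Y) / 2 \<le> 1 - x t - c * y t"
      by (simp add: field_simps)
    moreover have "0 < x t"
      using is_solution_pos(1)[OF sol] assms \<open>max 0 T < t\<close> by simp
    ultimately have "b * x t * ((1 - c * Y) / 2) \<le> b * x t * (1 - x t - c * y t)"
      using \<open>0 < b\<close> by (intro mult_left_mono) auto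
    then show "b * (1 - c * Y) / 2 * x t \<le> b * x t * (1 - x t - c * y t)"
      by (simp add: algebra_simps)
  qed (use is_solution_pos[OF sol] assms in auto)
qed

lemma is_solution_eventually_y_ge:
  assumes sol: "is_solution a b c k m x y" and "0 \<le> a" "0 \<le> k" "0 \<le> m" "0 < x 0" "0 < y 0"
    and x_le: "eventually (\<lambda>t. x t \<le> X) at_top" and "a * X < 1 / (1 + k * X)"
  defines "p \<equiv> 1 / (1 + k * X) - a * X"
  shows "eventually (\<lambda>t. p / (2 * (1 + m * X)) \<le> y t) at_top"
proof -
  obtain T where T: "\<And>t. T \<le> t \<Longrightarrow> x t \<le> X"
    using x_le unfolding eventually_at_top_linorder by blast
  have "0 \<le> X"
    using T[of "max 0 T"] is_solution_pos(1)[OF sol, of "max 0 T"] assms by simp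
  show ?thesis
  proof (rule eventually_ge_of_log_deriv_ge[where T = "max 0 T" and \<gamma> = "p / 2"])
    show "continuous_on {max 0 T..} y"
      by (rule continuous_on_subset[OF is_solution_continuous_on(2)[OF sol]]) auto
    fix t :: real assume t: "max 0 T < t"
    then show "(y has_real_derivative
        y t * (1 / (1 + k * x t) - y t - a * x t - m * x t * y t)) (at t)"
      by (intro is_solution_deriv(2)[OF sol]) auto
    have pos: "0 < x t" "0 < y t" "x t \<le> X"
      using is_solution_pos[OF sol] assms T[of t] t by auto
    assume "y t < p / (2 * (1 + m * X))"
    then have "y t + m * X * y t < p / 2"
      using \<open>0 \<le> m\<close> \<open>0 \<le> X\<close> by (simp add: field_simps add_pos_nonneg)
    moreover have "m * x t * y t \<le> m * X * y t"
      using pos \<open>0 \<le> m\<close> by (simp add: mult_left_mono mult_right_mono)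
    moreover have "1 / (1 + k * X) \<le> 1 / (1 + k * x t)"
      using pos \<open>0 \<le> k\<close>
      by (intro divide_left_mono mult_pos_pos add_pos_nonneg add_left_mono mult_left_mono) auto
    moreover have "a * x t \<le> a * X"
      using pos \<open>0 \<le> a\<close> by (simp add: mult_left_mono)
    ultimately have "p / 2 \<le> 1 / (1 + k * x t) - y t - a * x t - m * x t * y t"
      unfolding p_def by (simp add: field_simps)
    then show "p / 2 * y t \<le> y t * (1 / (1 + k * x t) - y t - a * x t - m * x t * y t)"
      using pos by (simp add: mult_left_mono mult.commute)
  next
    show "0 < p / (2 * (1 + m * X))"
      using assms \<open>0 \<le> X\<close> unfolding p_def by (simp add: add_pos_nonneg)
  qed (use is_solution_pos[OF sol] assms in auto)
qed

lemma is_solution_eventually_bounds: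
  assumes sol: "is_solution a b c k m x y" and "0 < x 0" "0 < y 0"
    and "0 \<le> a" "0 < b" "0 \<le> c" "0 \<le> k" "0 \<le> m"
    and "1 < X" "a * X < 1 / (1 + k * X)" and "1 < Y" "c * Y < 1"
  shows "eventually (\<lambda>t. (1 - c * Y) / 2 \<le> x t \<and> x t \<le> X \<and>
    (1 / (1 + k * X) - a * X) / (2 * (1 + m * X)) \<le> y t \<and> y t \<le> Y) at_top"
proof -
  have "eventually (\<lambda>t. x t \<le> X) at_top" "eventually (\<lambda>t. y t \<le> Y) at_top"
    using is_solution_eventually_x_le[OF sol] is_solution_eventually_y_le[OF sol] assms
    by simp_all
  moreover from this have "eventually (\<lambda>t. (1 - c * Y) / 2 \<le> x t) at_top"
    "eventually (\<lambda>t. (1 / (1 + k * X) - a * X) / (2 * (1 + m * X)) \<le> y t) at_top"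
    using is_solution_eventually_x_ge[OF sol] is_solution_eventually_y_ge[OF sol] assms
    by simp_all
  ultimately show ?thesis
    by eventually_elim simp
qed

theorem theorem3:
  fixes a b c k m :: real
  assumes "a > 0" "b > 0" "c > 0" "k > 0" "m > 0"
    and "k < 1 / a - 1"
    and "c < 1"
  shows "\<exists>\<mu> M. 0 < \<mu> \<and> \<mu> \<le> M \<and>
    (\<forall>x y. is_solution a b c k m x y \<and> x 0 > 0 \<and> y 0 > 0 \<longrightarrow>
       ereal \<mu> \<le> Liminf at_top (\<lambda>t. ereal (x t)) \<and>
       Liminf at_top (\<lambda>t. ereal (x t)) \<le> Limsup at_top (\<lambda>t. ereal (x t)) \<and>
       Limsup at_top (\<lambda>t. ereal (x t)) \<le> ereal M \<and>
       ereal \<mu> \<le> Liminf at_top (\<lambda>t. ereal (y t)) \<and>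
       Liminf at_top (\<lambda>t. ereal (y t)) \<le> Limsup at_top (\<lambda>t. ereal (y t)) \<and>
       Limsup at_top (\<lambda>t. ereal (y t)) \<le> ereal M)"
proof -
  have "a * (1 + k) < 1"
    using assms by (simp add: field_simps)
  then obtain X where X: "1 < X" "a * X < 1 / (1 + k * X)"
    using ex_gt_1_mult_less_inverse[of k a] \<open>0 < k\<close> by auto
  define Y where "Y = (1 + 1 / c) / 2"
  have Y: "1 < Y" "c * Y < 1"
    using \<open>0 < c\<close> \<open>c < 1\<close> by (simp_all add: Y_def field_simps)
  define \<mu> where "\<mu> = min ((1 - c * Y) / 2) ((1 / (1 + k * X) - a * X) / (2 * (1 + m * X)))"
  define M where "M = max X Y"
  have "0 < \<mu>"
    using X Y \<open>0 < m\<close> unfolding \<mu>_def by (simp add: add_pos_pos)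
  have "(1 - c * Y) / 2 < Y"
    using Y mult_pos_pos[OF \<open>0 < c\<close>, of Y] by simp
  then have "\<mu> \<le> M"
    unfolding \<mu>_def M_def by linarith
  show ?thesis
  proof (rule exI[of _ \<mu>], rule exI[of _ M],
      intro conjI[OF \<open>0 < \<mu>\<close>] conjI[OF \<open>\<mu> \<le> M\<close>] allI impI)
    fix x y assume "is_solution a b c k m x y \<and> 0 < x 0 \<and> 0 < y 0"
    then have ev: "eventually (\<lambda>t. \<mu> \<le> x t \<and> x t \<le> M) at_top"
      "eventually (\<lambda>t. \<mu> \<le> y t \<and> y t \<le> M) at_top"
      using is_solution_eventually_bounds[of a b c k m x y X Y] assms X Y
      by (auto simp: \<mu>_def M_def min_le_iff_disj le_max_iff_disj elim!: eventually_mono)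
    show "ereal \<mu> \<le> Liminf at_top (\<lambda>t. ereal (x t)) \<and>
       Liminf at_top (\<lambda>t. ereal (x t)) \<le> Limsup at_top (\<lambda>t. ereal (x t)) \<and>
       Limsup at_top (\<lambda>t. ereal (x t)) \<le> ereal M \<and>
       ereal \<mu> \<le> Liminf at_top (\<lambda>t. ereal (y t)) \<and>
       Liminf at_top (\<lambda>t. ereal (y t)) \<le> Limsup at_top (\<lambda>t. ereal (y t)) \<and>
       Limsup at_top (\<lambda>t. ereal (y t)) \<le> ereal M"
      using ereal_Liminf_Limsup_bounds[OF trivial_limit_at_top_linorder ev(1)]
        ereal_Liminf_Limsup_bounds[OF trivial_limit_at_top_linorder ev(2)] by simp
  qed
qed

end
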